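(* Consider Markovian SIR dynamics on a tree network $D$ with independent initial node states. Then for all $i,j\in V$ and all $t\ge0$ the following hold exactly: $$\frac{d}{dt}\langle S_i\rangle=-\sum_{j=1}^N T_{ij}\langle S_iI_j\rangle,\qquad \frac{d}{dt}\langle I_i\rangle=\sum_{j=1}^N T_{ij}\langle S_iI_j\rangle-\gamma_i\langle I_i\rangle,$$ $$\frac{d}{dt}\langle S_iI_j\rangle=\sum_{k\neq i}T_{jk}\frac{\langle S_iS_j\rangle\langle S_jI_k\rangle}{\langle S_j\rangle}-\sum_{k\neq j}T_{ik}\frac{\langle S_iI_k\rangle\langle S_iI_j\rangle}{\langle S_i\rangle}-T_{ij}\langle S_iI_j\rangle-\gamma_j\langle S_iI_j\rangle,$$ $$\frac{d}{dt}\langle S_iS_j\rangle=-\sum_{k\neq j}T_{ik}\frac{\langle S_iS_j\rangle\langle S_iI_k\rangle}{\langle S_i\rangle}-\sum_{k\neq i}T_{jk}\frac{\langle S_iS_j\rangle\langle S_jI_k\rangle}{\langle S_j\rangle},$$ where a fraction whose denominator vanishes is interpreted as $0$.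
   Context: $D=(V,A)$ is a directed graph on $V=\{1,\dots,N\}$, with rates $T_{ij}\ge0$, $T_{ij}>0$ iff $(j,i)\in A$, $T_{ii}=0$, and removal rates $\gamma_i>0$. Markovian SIR dynamics: continuous-time Markov chain on $\{S,I,R\}^V$; while $j$ is infectious it makes infectious contacts to $i$ by a Poisson process of rate $T_{ij}$; a susceptible node receiving an infectious contact immediately becomes infectious; infectious node $i$ becomes removed at rate $\gamma_i$; $R$ is absorbing. The node states at time $0$ are mutually independent. $S_i,I_i$ are indicators that node $i$ is susceptible/infectious at time $t$, $\langle\cdot\rangle$ is expectation, and products denote joint indicators. $D$ is a tree network if its underlying undirected graph (obtained by replacing every arc by an undirected edge) is a tree or a forest. *)

theory Defs
  imports "HOL-Analysis.Analysis"
begin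

datatype sir = Sus | Inf | Rem

lemma UNIV_sir: "(UNIV :: sir set) = {Sus, Inf, Rem}"
  using sir.exhaust by auto

instance sir :: finite
  by standard (simp add: UNIV_sir)

text \<open>Nodes are the elements of a finite type 'n (V = UNIV, N = CARD('n)).
  Rates: T i j is the rate of infectious contacts from j to i
  (T i j > 0 iff (j,i) is an arc).\<close>

definition und_adj :: "('n \<Rightarrow> 'n \<Rightarrow> real) \<Rightarrow> 'n \<Rightarrow> 'n \<Rightarrow> bool" where
  "und_adj T i j \<longleftrightarrow> i \<noteq> j \<and> (T i j > 0 \<or> T j i > 0)"

text \<open>D is a tree network: its underlying undirected graph is a tree or a
  forest, i.e. it contains no cycle (a closed walk through at least 3 distinct
  vertices).\<close>
definition tree_network :: "('n \<Rightarrow> 'n \<Rightarrow> real) \<Rightarrow> bool" where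
  "tree_network T \<longleftrightarrow>
     \<not> (\<exists>cs. length cs \<ge> 3 \<and> distinct cs \<and>
            (\<forall>k < length cs. und_adj T (cs ! k) (cs ! ((k + 1) mod length cs))))"

definition sir_rate :: "('n::finite \<Rightarrow> 'n \<Rightarrow> real) \<Rightarrow> ('n \<Rightarrow> real) \<Rightarrow> ('n \<Rightarrow> sir) \<Rightarrow> ('n \<Rightarrow> sir) \<Rightarrow> real" where
  "sir_rate T gam x y =
     (\<Sum>i\<in>UNIV.
        (if x i = Sus \<and> y = x(i := Inf) then (\<Sum>j\<in>UNIV. T i j * (if x j = Inf then 1 else 0)) else 0)
      + (if x i = Inf \<and> y = x(i := Rem) then gam i else 0))"

text \<open>p t is the law (probability mass function) of the chain at time t; it
  is the (unique) solution of the Kolmogorov forward equation.\<close>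
definition kolmogorov_forward ::
  "('n::finite \<Rightarrow> 'n \<Rightarrow> real) \<Rightarrow> ('n \<Rightarrow> real) \<Rightarrow> (real \<Rightarrow> ('n \<Rightarrow> sir) \<Rightarrow> real) \<Rightarrow> bool" where
  "kolmogorov_forward T gam p \<longleftrightarrow>
     (\<forall>t\<ge>0. \<forall>y. ((\<lambda>s. p s y) has_real_derivative
        ((\<Sum>x\<in>UNIV. p t x * sir_rate T gam x y) - p t y * (\<Sum>z\<in>UNIV. sir_rate T gam y z)))
        (at t within {0..}))"

definition expt :: "(real \<Rightarrow> ('n::finite \<Rightarrow> sir) \<Rightarrow> real) \<Rightarrow> real \<Rightarrow> (('n \<Rightarrow> sir) \<Rightarrow> bool) \<Rightarrow> real" where
  "expt p t P = (\<Sum>x\<in>UNIV. p t x * (if P x then 1 else 0))"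

definition frac :: "real \<Rightarrow> real \<Rightarrow> real" where
  "frac a b = (if b = 0 then 0 else a / b)"

end

theory Submission
  imports Defs
begin

text \<open>
  Let \<open>c\<close> have two distinct neighbours \<open>a\<close> and \<open>b\<close>. In a tree, the nodes other than \<open>c\<close>
  split into a part \<open>A\<close> containing \<open>a\<close> and a part \<open>B\<close> containing \<open>b\<close> with no contacts
  between them. While \<open>c\<close> is susceptible, \<open>A\<close> and \<open>B\<close> therefore evolve independently:
  for \<open>\<phi>\<close> depending only on \<open>A\<close> and \<open>\<psi>\<close> only on \<open>B\<close>, the generator maps
  \<open>S\<^sub>c \<phi> \<psi>\<close> to \<open>S\<^sub>c ((L\<^sub>A \<phi>) \<psi> + \<phi> (L\<^sub>B \<psi>))\<close>, where \<open>L\<^sub>A\<close>, \<open>L\<^sub>B\<close> are the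
  generators on \<open>A\<close>, \<open>B\<close> killed when \<open>c\<close> gets infected. So the matrix
  \<open>M(y, z) = P(S\<^sub>c, x|\<^sub>A = y, x|\<^sub>B = z)\<close> solves \<open>M' = \<alpha> M + M \<beta>\<^sup>T\<close>; it has rank one
  at time 0 because the initial states are independent, and keeps rank one by
  Gronwall's lemma applied to its \<open>2 \<times> 2\<close> minors. Rank one is conditional independence of
  \<open>A\<close> and \<open>B\<close> given \<open>S\<^sub>c\<close>, i.e. the pair closure
  \<open>\<langle>X\<^sub>a S\<^sub>c Y\<^sub>b\<rangle> \<langle>S\<^sub>c\<rangle> = \<langle>X\<^sub>a S\<^sub>c\<rangle> \<langle>S\<^sub>c Y\<^sub>b\<rangle>\<close>; nonnegativity of the law
  settles the case \<open>\<langle>S\<^sub>c\<rangle> = 0\<close>. Inserting the closure into the exact moment equations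
  obtained from the forward equation gives the system.
\<close>

section \<open>Linear differential inequalities\<close>

lemma gronwall_zero:
  fixes E E' :: "real \<Rightarrow> real"
  assumes deriv: "\<And>s. s \<ge> 0 \<Longrightarrow> (E has_real_derivative E' s) (at s within {0..})"
    and growth: "\<And>s. s \<ge> 0 \<Longrightarrow> E' s \<le> K * E s"
    and nonneg: "\<And>s. s \<ge> 0 \<Longrightarrow> E s \<ge> 0"
    and init: "E 0 = 0" and t: "t \<ge> 0"
  shows "E t = 0"
proof -
  define F where "F s = exp (- (K * s)) * E s" for s
  have F_deriv: "(F has_real_derivative exp (- (K * s)) * (E' s - K * E s)) (at s within {0..})"
    if "s \<ge> 0" for s
    unfolding F_def using deriv[OF that] by (auto intro!: derivative_eq_intros simp: algebra_simps)
  have cont: "continuous_on {0..t} F"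
    by (rule DERIV_continuous_on[OF DERIV_subset[OF F_deriv]]) auto
  have "F t \<le> F 0"
  proof (rule DERIV_nonpos_imp_decreasing_open[OF t _ cont])
    fix s assume s: "0 < s" "s < t"
    have "(F has_real_derivative exp (- (K * s)) * (E' s - K * E s)) (at s within {0<..})"
      by (rule DERIV_subset[OF F_deriv]) (use s in auto)
    then have "(F has_real_derivative exp (- (K * s)) * (E' s - K * E s)) (at s)"
      using at_within_open[of s "{0<..}"] s by auto
    moreover have "exp (- (K * s)) * (E' s - K * E s) \<le> 0"
      using growth[of s] s by (simp add: mult_nonneg_nonpos)
    ultimately show "\<exists>y. (F has_real_derivative y) (at s) \<and> y \<le> 0" by blast
  qed
  then have "E t \<le> 0" by (simp add: F_def init mult_le_0_iff)
  with nonneg[OF t] show ?thesis by simp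
qed

lemma deriv_linearly_bounded_imp_zero:
  fixes c c' :: "real \<Rightarrow> 'i \<Rightarrow> real"
  assumes I: "finite I"
    and deriv: "\<And>t i. t \<ge> 0 \<Longrightarrow> i \<in> I \<Longrightarrow> ((\<lambda>s. c s i) has_real_derivative c' t i) (at t within {0..})"
    and bound: "\<And>t i. t \<ge> 0 \<Longrightarrow> i \<in> I \<Longrightarrow> \<bar>c' t i\<bar> \<le> K * (\<Sum>j\<in>I. \<bar>c t j\<bar>)"
    and init: "\<And>i. i \<in> I \<Longrightarrow> c 0 i = 0" and t: "t \<ge> 0" and i: "i \<in> I"
  shows "c t i = 0"
proof -
  define E where "E s = (\<Sum>j\<in>I. (c s j)\<^sup>2)" for s
  have E_deriv: "(E has_real_derivative (\<Sum>j\<in>I. 2 * c s j * c' s j)) (at s within {0..})"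
    if "s \<ge> 0" for s
    unfolding E_def
    by (rule DERIV_sum) (use deriv[OF that] in \<open>auto intro!: derivative_eq_intros\<close>)
  have E_growth: "(\<Sum>j\<in>I. 2 * c s j * c' s j) \<le> (2 * \<bar>K\<bar> * real (card I)) * E s"
    if s: "s \<ge> 0" for s
  proof -
    let ?S = "\<Sum>j\<in>I. \<bar>c s j\<bar>"
    have "(\<Sum>j\<in>I. 2 * c s j * c' s j) \<le> (\<Sum>j\<in>I. 2 * \<bar>c s j\<bar> * (\<bar>K\<bar> * ?S))"
    proof (intro sum_mono)
      fix j assume j: "j \<in> I"
      have "\<bar>c' s j\<bar> \<le> \<bar>K\<bar> * ?S"
        using bound[OF s j] mult_right_mono[OF abs_ge_self[of K], of ?S] by (simp add: sum_nonneg)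
      then have "\<bar>c s j\<bar> * \<bar>c' s j\<bar> \<le> \<bar>c s j\<bar> * (\<bar>K\<bar> * ?S)"
        by (simp add: mult_left_mono)
      then show "2 * c s j * c' s j \<le> 2 * \<bar>c s j\<bar> * (\<bar>K\<bar> * ?S)"
        using abs_ge_self[of "c s j * c' s j"] by (simp add: abs_mult)
    qed
    also have "\<dots> = 2 * \<bar>K\<bar> * ?S\<^sup>2"
      by (simp only: sum_distrib_right[symmetric] sum_distrib_left[symmetric])
        (simp add: power2_eq_square mult_ac)
    also have "\<dots> \<le> 2 * \<bar>K\<bar> * (real (card I) * E s)"
      using sum_squared_le_sum_of_squares[of "\<lambda>j. \<bar>c s j\<bar>" I]
      by (intro mult_left_mono) (simp_all add: E_def mult.commute)
    finally show ?thesis by simp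
  qed
  have "E t = 0"
    by (rule gronwall_zero[OF E_deriv E_growth _ _ t]) (auto simp: E_def init intro: sum_nonneg)
  then show ?thesis
    using I i unfolding E_def by (subst (asm) sum_nonneg_eq_0_iff) auto
qed

lemma abs_sum_mult_le:
  fixes f g :: "'a \<Rightarrow> real"
  assumes "\<And>a. a \<in> A \<Longrightarrow> \<bar>g a\<bar> \<le> S"
  shows "\<bar>\<Sum>a\<in>A. f a * g a\<bar> \<le> (\<Sum>a\<in>A. \<bar>f a\<bar>) * S"
proof -
  have "\<bar>\<Sum>a\<in>A. f a * g a\<bar> \<le> (\<Sum>a\<in>A. \<bar>f a\<bar> * \<bar>g a\<bar>)"
    unfolding abs_mult[symmetric] by (rule sum_abs)
  also have "\<dots> \<le> (\<Sum>a\<in>A. \<bar>f a\<bar> * S)"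
    using assms by (intro sum_mono mult_left_mono) auto
  finally show ?thesis by (simp add: sum_distrib_right)
qed

text \<open>The \<open>2 \<times> 2\<close> minors of a solution of \<open>M' = \<alpha> M + M \<beta>\<^sup>T\<close> satisfy a linear ODE
  themselves, so they vanish for all time if they vanish initially.\<close>
lemma sylvester_ode_rank_one:
  fixes M :: "real \<Rightarrow> 'a \<Rightarrow> 'b \<Rightarrow> real"
  assumes Y: "finite Y" and Z: "finite Z"
    and deriv: "\<And>t y z. t \<ge> 0 \<Longrightarrow> y \<in> Y \<Longrightarrow> z \<in> Z \<Longrightarrow>
      ((\<lambda>s. M s y z) has_real_derivative (\<Sum>y2\<in>Y. \<alpha> y y2 * M t y2 z) + (\<Sum>z2\<in>Z. \<beta> z z2 * M t y z2))
        (at t within {0..})"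
    and init: "\<And>y z y' z'. y \<in> Y \<Longrightarrow> z \<in> Z \<Longrightarrow> y' \<in> Y \<Longrightarrow> z' \<in> Z \<Longrightarrow>
      M 0 y z * M 0 y' z' = M 0 y z' * M 0 y' z"
    and t: "t \<ge> 0" and mem: "y \<in> Y" "z \<in> Z" "y' \<in> Y" "z' \<in> Z"
  shows "M t y z * M t y' z' = M t y z' * M t y' z"
proof -
  let ?Q = "Y \<times> Z \<times> Y \<times> Z"
  define C where "C s = (\<lambda>(y, z, y', z'). M s y z * M s y' z' - M s y z' * M s y' z)" for s
  define C' where "C' s = (\<lambda>(y, z, y', z').
      (\<Sum>y2\<in>Y. \<alpha> y y2 * C s (y2, z, y', z')) + (\<Sum>z2\<in>Z. \<beta> z z2 * C s (y, z2, y', z'))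
    + (\<Sum>y2\<in>Y. \<alpha> y' y2 * C s (y, z, y2, z')) + (\<Sum>z2\<in>Z. \<beta> z' z2 * C s (y, z, y', z2)))" for s
  define K\<alpha> where "K\<alpha> = (\<Sum>y\<in>Y. \<Sum>y2\<in>Y. \<bar>\<alpha> y y2\<bar>)"
  define K\<beta> where "K\<beta> = (\<Sum>z\<in>Z. \<Sum>z2\<in>Z. \<bar>\<beta> z z2\<bar>)"
  have "C t (y, z, y', z') = 0"
  proof (rule deriv_linearly_bounded_imp_zero[where c = C and c' = C' and K = "2 * (K\<alpha> + K\<beta>)" and I = ?Q])
    show "finite ?Q" using Y Z by simp
  next
    fix s :: real and q assume s: "s \<ge> 0" and "q \<in> ?Q"
    then obtain y z y' z' where q: "q = (y, z, y', z')" and in_Q: "y \<in> Y" "z \<in> Z" "y' \<in> Y" "z' \<in> Z"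
      by auto
    let ?dM = "\<lambda>y z. (\<Sum>y2\<in>Y. \<alpha> y y2 * M s y2 z) + (\<Sum>z2\<in>Z. \<beta> z z2 * M s y z2)"
    have "((\<lambda>s. C s q) has_real_derivative
        ?dM y z * M s y' z' + ?dM y' z' * M s y z - (?dM y z' * M s y' z + ?dM y' z * M s y z'))
        (at s within {0..})"
      unfolding q C_def prod.case using in_Q by (intro DERIV_diff DERIV_mult deriv s)
    moreover have "?dM y z * M s y' z' + ?dM y' z' * M s y z - (?dM y z' * M s y' z + ?dM y' z * M s y z')
        = C' s q"
      unfolding q C'_def C_def prod.case
      by (simp add: sum_distrib_left sum_distrib_right sum_subtractf right_diff_distrib algebra_simps)
    ultimately show "((\<lambda>s. C s q) has_real_derivative C' s q) (at s within {0..})" by simp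
    let ?S = "\<Sum>q\<in>?Q. \<bar>C s q\<bar>"
    have C_le: "\<bar>C s q'\<bar> \<le> ?S" if "q' \<in> ?Q" for q'
      using that Y Z by (intro member_le_sum) auto
    have S_nonneg: "?S \<ge> 0" by (simp add: sum_nonneg)
    have sum_le: "\<bar>\<Sum>w\<in>W. \<gamma> u w * C s (f w)\<bar> \<le> K * ?S"
      if "(\<Sum>w\<in>W. \<bar>\<gamma> u w\<bar>) \<le> K" "\<And>w. w \<in> W \<Longrightarrow> f w \<in> ?Q" for W \<gamma> u f K
    proof -
      have "\<bar>\<Sum>w\<in>W. \<gamma> u w * C s (f w)\<bar> \<le> (\<Sum>w\<in>W. \<bar>\<gamma> u w\<bar>) * ?S"
        using C_le that(2) by (intro abs_sum_mult_le) auto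
      also have "\<dots> \<le> K * ?S"
        using that(1) S_nonneg by (rule mult_right_mono)
      finally show ?thesis .
    qed
    have K\<alpha>_le: "(\<Sum>y2\<in>Y. \<bar>\<alpha> u y2\<bar>) \<le> K\<alpha>" if "u \<in> Y" for u
      unfolding K\<alpha>_def using that Y by (intro member_le_sum sum_nonneg) auto
    have K\<beta>_le: "(\<Sum>z2\<in>Z. \<bar>\<beta> u z2\<bar>) \<le> K\<beta>" if "u \<in> Z" for u
      unfolding K\<beta>_def using that Z by (intro member_le_sum sum_nonneg) auto
    have "\<bar>\<Sum>y2\<in>Y. \<alpha> y y2 * C s (y2, z, y', z')\<bar> \<le> K\<alpha> * ?S"
      "\<bar>\<Sum>z2\<in>Z. \<beta> z z2 * C s (y, z2, y', z')\<bar> \<le> K\<beta> * ?S"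
      "\<bar>\<Sum>y2\<in>Y. \<alpha> y' y2 * C s (y, z, y2, z')\<bar> \<le> K\<alpha> * ?S"
      "\<bar>\<Sum>z2\<in>Z. \<beta> z' z2 * C s (y, z, y', z2)\<bar> \<le> K\<beta> * ?S"
      using in_Q by (intro sum_le K\<alpha>_le K\<beta>_le; simp)+
    then show "\<bar>C' s q\<bar> \<le> 2 * (K\<alpha> + K\<beta>) * ?S"
      unfolding q C'_def prod.case abs_le_iff distrib_left distrib_right mult.assoc by linarith
  next
    fix q assume "q \<in> ?Q"
    then show "C 0 q = 0" using init by (auto simp: C_def)
  qed (use t mem in auto)
  then show ?thesis by (simp add: C_def)
qed

lemma min_0_squared_has_real_derivative:
  "((\<lambda>s::real. (min 0 s)\<^sup>2) has_real_derivative 2 * min 0 x) (at x)"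
proof (cases x "0::real" rule: linorder_cases)
  case less
  have "\<forall>\<^sub>F s in nhds x. (min 0 s)\<^sup>2 = s\<^sup>2"
    using eventually_nhds_in_open[of "{..<0}" x] less by (auto elim!: eventually_mono)
  moreover have "((\<lambda>s::real. s\<^sup>2) has_real_derivative 2 * x) (at x)"
    by (auto intro!: derivative_eq_intros)
  ultimately show ?thesis
    using less by (subst DERIV_cong_ev[OF refl _ refl]) auto
next
  case greater
  have "\<forall>\<^sub>F s in nhds x. (min 0 s)\<^sup>2 = (0::real)"
    using eventually_nhds_in_open[of "{0<..}" x] greater by (auto elim!: eventually_mono)
  from DERIV_cong_ev[OF refl this refl] show ?thesis
    using greater by simp
next
  case equal
  have "((min 0 (0 + h))\<^sup>2 - (min 0 0)\<^sup>2) / h = min 0 h" for h :: real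
    by (cases "h < 0") (auto simp: power2_eq_square min_def)
  moreover have "((\<lambda>h. min 0 h) \<longlongrightarrow> (0::real)) (at 0)"
    by (rule tendsto_eq_intros) auto
  ultimately show ?thesis
    using equal by (simp add: DERIV_def)
qed

lemma metzler_ode_nonneg:
  fixes q :: "real \<Rightarrow> 'i::finite \<Rightarrow> real"
  assumes deriv: "\<And>t i. t \<ge> 0 \<Longrightarrow>
      ((\<lambda>s. q s i) has_real_derivative (\<Sum>j\<in>UNIV. m i j * q t j)) (at t within {0..})"
    and off_diag: "\<And>i j. i \<noteq> j \<Longrightarrow> m i j \<ge> 0"
    and init: "\<And>i. q 0 i \<ge> 0" and t: "t \<ge> 0"
  shows "q t i \<ge> 0"
proof -
  define a where "a s j = min 0 (q s j)" for s j
  define E where "E s = (\<Sum>j\<in>UNIV. (a s j)\<^sup>2)" for s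
  define K where "K = (\<Sum>i\<in>UNIV. \<Sum>j\<in>UNIV. \<bar>m i j\<bar>)"
  have E_deriv: "(E has_real_derivative (\<Sum>i\<in>UNIV. \<Sum>j\<in>UNIV. 2 * a s i * m i j * q s j))
      (at s within {0..})" if "s \<ge> 0" for s
    unfolding E_def a_def
  proof (rule DERIV_sum)
    fix i
    show "((\<lambda>s. (min 0 (q s i))\<^sup>2) has_real_derivative (\<Sum>j\<in>UNIV. 2 * min 0 (q s i) * m i j * q s j))
       (at s within {0..})"
      using DERIV_chain2[OF min_0_squared_has_real_derivative deriv[OF that]]
      by (simp add: sum_distrib_left mult.assoc)
  qed
  have term_le: "2 * a s i * m i j * q s j \<le> K * ((a s i)\<^sup>2 + (a s j)\<^sup>2)" for s i j
  proof -
    \<comment> \<open>Off the diagonal \<open>m i j \<ge> 0\<close>, \<open>a s i \<le> 0\<close> and \<open>q s j \<ge> a s j\<close>;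
      on it \<open>a s i * q s i = (a s i)\<^sup>2\<close>.\<close>
    have "a s i * q s j \<le> a s i * a s j" if "i \<noteq> j"
      using mult_left_mono_neg[of "a s j" "q s j" "a s i"] by (simp add: a_def)
    then have "m i j * (a s i * q s j) \<le> m i j * (a s i * a s j)"
      using off_diag[of i j] by (cases "i = j") (auto simp: a_def min_def mult_left_mono)
    also have "\<dots> \<le> \<bar>m i j\<bar> * (\<bar>a s i\<bar> * \<bar>a s j\<bar>)"
      by (metis abs_ge_self abs_mult)
    also have "\<dots> \<le> \<bar>m i j\<bar> * (((a s i)\<^sup>2 + (a s j)\<^sup>2) / 2)"
      using sum_squares_bound[of "\<bar>a s i\<bar>" "\<bar>a s j\<bar>"] by (intro mult_left_mono) auto
    also have "\<dots> \<le> K * (((a s i)\<^sup>2 + (a s j)\<^sup>2) / 2)"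
      unfolding K_def by (intro mult_right_mono member_le_sum[of i UNIV, THEN order_trans[rotated]]
          member_le_sum sum_nonneg) auto
    finally show ?thesis by (simp add: algebra_simps)
  qed
  have E_growth: "(\<Sum>i\<in>UNIV. \<Sum>j\<in>UNIV. 2 * a s i * m i j * q s j) \<le> (2 * K * real CARD('i)) * E s" for s
  proof -
    have "(\<Sum>i\<in>UNIV. \<Sum>j\<in>UNIV. 2 * a s i * m i j * q s j)
        \<le> (\<Sum>i\<in>UNIV. \<Sum>j\<in>UNIV. K * ((a s i)\<^sup>2 + (a s j)\<^sup>2))"
      by (intro sum_mono term_le)
    also have "\<dots> = (2 * K * real CARD('i)) * E s"
      by (simp add: E_def distrib_left sum.distrib sum_distrib_left[symmetric] algebra_simps)
    finally show ?thesis .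
  qed
  have "E t = 0"
    by (rule gronwall_zero[OF E_deriv E_growth _ _ t]) (auto simp: E_def a_def init intro: sum_nonneg)
  then have "(a t i)\<^sup>2 = 0"
    unfolding E_def by (subst (asm) sum_nonneg_eq_0_iff) auto
  then show ?thesis by (simp add: a_def)
qed

section \<open>Separation in tree networks\<close>

definition separates :: "('n \<Rightarrow> 'n \<Rightarrow> real) \<Rightarrow> 'n \<Rightarrow> 'n set \<Rightarrow> bool" where
  "separates T c A \<longleftrightarrow> c \<notin> A \<and> (\<forall>u\<in>A. \<forall>v. v \<notin> A \<longrightarrow> v \<noteq> c \<longrightarrow> T u v = 0 \<and> T v u = 0)"

definition path_avoiding :: "('n \<Rightarrow> 'n \<Rightarrow> real) \<Rightarrow> 'n \<Rightarrow> 'n list \<Rightarrow> bool" where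
  "path_avoiding T c xs \<longleftrightarrow> xs \<noteq> [] \<and> distinct xs \<and> c \<notin> set xs \<and> successively (und_adj T) xs"

lemma und_adj_sym: "und_adj T i j \<longleftrightarrow> und_adj T j i"
  by (auto simp: und_adj_def)

lemma successively_cyclic_nth:
  assumes "successively P xs" "P (last xs) (hd xs)" "k < length xs"
  shows "P (xs ! k) (xs ! ((k + 1) mod length xs))"
proof (cases "Suc k < length xs")
  case True
  then show ?thesis using successively_nth[OF assms(1)] by simp
next
  case False
  then have "k = length xs - 1" "xs \<noteq> []" using assms(3) by auto
  then show ?thesis using assms(2) by (simp add: last_conv_nth hd_conv_nth)
qed

lemma tree_network_no_path_between_neighbours:
  assumes tree: "tree_network T" and ca: "und_adj T c a" and cb: "und_adj T c b" and "a \<noteq> b"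
    and path: "path_avoiding T c xs" and hd: "hd xs = a" and last: "last xs = b"
  shows False
proof -
  let ?cs = "c # xs"
  have "length ?cs \<ge> 3"
    using path \<open>a \<noteq> b\<close> hd last by (cases xs rule: remdups_adj.cases) (auto simp: path_avoiding_def)
  moreover have "distinct ?cs"
    using path by (simp add: path_avoiding_def)
  moreover have "successively (und_adj T) ?cs"
    using path ca hd by (simp add: path_avoiding_def successively_Cons)
  moreover have "und_adj T (last ?cs) (hd ?cs)"
    using path cb last by (simp add: path_avoiding_def und_adj_sym)
  ultimately show False
    using tree successively_cyclic_nth[of "und_adj T" ?cs] unfolding tree_network_def by blast
qed

lemma path_avoiding_snoc:
  assumes path: "path_avoiding T c xs" and adj: "und_adj T (last xs) v" and "v \<noteq> c"
  shows "\<exists>ys. path_avoiding T c ys \<and> hd ys = hd xs \<and> last ys = v"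
proof (cases "v \<in> set xs")
  case True
  then obtain us zs where xs: "xs = us @ v # zs" by (meson split_list)
  then have "path_avoiding T c (us @ [v])"
    using path by (auto simp: path_avoiding_def successively_append_iff)
  then show ?thesis using xs by (intro exI[of _ "us @ [v]"]) (cases us; simp)
next
  case False
  then have "path_avoiding T c (xs @ [v])"
    using assms by (auto simp: path_avoiding_def successively_append_iff)
  then show ?thesis using path by (intro exI[of _ "xs @ [v]"]) (simp add: path_avoiding_def)
qed

lemma tree_network_separates:
  assumes T_nonneg: "\<forall>i j. T i j \<ge> 0" and tree: "tree_network T"
    and ca: "und_adj T c a" and cb: "und_adj T c b" and "a \<noteq> b"
  shows "\<exists>A. a \<in> A \<and> b \<notin> A \<and> separates T c A"
proof (intro exI conjI)
  define A where "A = {last xs | xs. path_avoiding T c xs \<and> hd xs = a}"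
  have "path_avoiding T c [a]"
    using ca by (auto simp: path_avoiding_def und_adj_def)
  then show "a \<in> A" unfolding A_def by force
  show "b \<notin> A"
    unfolding A_def using tree_network_no_path_between_neighbours[OF tree ca cb \<open>a \<noteq> b\<close>] by blast
  have "c \<notin> A"
    unfolding A_def path_avoiding_def by (auto simp: last_in_set)
  moreover have "T u v = 0 \<and> T v u = 0" if "u \<in> A" "v \<notin> A" "v \<noteq> c" for u v
  proof -
    have "\<not> und_adj T u v"
      using that path_avoiding_snoc[of T c _ v] unfolding A_def by blast
    moreover have "u \<noteq> v" using that by auto
    ultimately show ?thesis
      using T_nonneg by (auto simp: und_adj_def order.strict_iff_order)
  qed
  ultimately show "separates T c A"
    unfolding separates_def by blast
qed

section \<open>The generator of the SIR chain\<close>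

definition expect :: "(real \<Rightarrow> ('n::finite \<Rightarrow> sir) \<Rightarrow> real) \<Rightarrow> real \<Rightarrow> (('n \<Rightarrow> sir) \<Rightarrow> real) \<Rightarrow> real" where
  "expect p t h = (\<Sum>x\<in>UNIV. p t x * h x)"

lemma expt_eq_expect: "expt p t P = expect p t (\<lambda>x. of_bool (P x))"
  unfolding expt_def expect_def of_bool_def ..

lemma expect_add: "expect p t (\<lambda>x. f x + g x) = expect p t f + expect p t g"
  by (simp add: expect_def sum.distrib algebra_simps)

lemma expect_diff: "expect p t (\<lambda>x. f x - g x) = expect p t f - expect p t g"
  by (simp add: expect_def sum_subtractf algebra_simps)

lemma expect_minus: "expect p t (\<lambda>x. - f x) = - expect p t f"
  by (simp add: expect_def sum_negf)

lemma expect_cmult: "expect p t (\<lambda>x. a * f x) = a * expect p t f"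
  by (simp add: expect_def sum_distrib_left mult_ac)

lemma expect_sum: "expect p t (\<lambda>x. \<Sum>k\<in>K. f k x) = (\<Sum>k\<in>K. expect p t (f k))"
  by (simp add: expect_def sum_distrib_left sum.swap[of _ K])

lemmas expect_linear = expect_add expect_diff expect_minus expect_cmult expect_sum

definition infection_pressure :: "('n \<Rightarrow> 'n \<Rightarrow> real) \<Rightarrow> 'n set \<Rightarrow> ('n \<Rightarrow> sir) \<Rightarrow> 'n \<Rightarrow> real" where
  "infection_pressure T X x m = (\<Sum>j\<in>X. T m j * (if x j = Inf then 1 else 0))"

definition sir_generator_on ::
  "('n \<Rightarrow> 'n \<Rightarrow> real) \<Rightarrow> ('n \<Rightarrow> real) \<Rightarrow> 'n set \<Rightarrow> (('n \<Rightarrow> sir) \<Rightarrow> real) \<Rightarrow> ('n \<Rightarrow> sir) \<Rightarrow> real" where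
  "sir_generator_on T gam X h x = (\<Sum>m\<in>X.
       (if x m = Sus then infection_pressure T X x m * (h (x(m := Inf)) - h x) else 0)
     + (if x m = Inf then gam m * (h (x(m := Rem)) - h x) else 0))"

abbreviation sir_generator :: "('n \<Rightarrow> 'n \<Rightarrow> real) \<Rightarrow> ('n \<Rightarrow> real) \<Rightarrow> (('n \<Rightarrow> sir) \<Rightarrow> real) \<Rightarrow> ('n \<Rightarrow> sir) \<Rightarrow> real" where
  "sir_generator T gam \<equiv> sir_generator_on T gam UNIV"

lemma sum_sir_rate_mult:
  fixes x :: "'n::finite \<Rightarrow> sir"
  shows "(\<Sum>y\<in>UNIV. sir_rate T gam x y * h y) =
    (\<Sum>m\<in>UNIV. (if x m = Sus then infection_pressure T UNIV x m * h (x(m := Inf)) else 0)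
             + (if x m = Inf then gam m * h (x(m := Rem)) else 0))"
proof -
  have "(\<Sum>y\<in>UNIV. sir_rate T gam x y * h y) = (\<Sum>m\<in>UNIV. \<Sum>y\<in>UNIV.
      ((if x m = Sus \<and> y = x(m := Inf) then infection_pressure T UNIV x m else 0)
     + (if x m = Inf \<and> y = x(m := Rem) then gam m else 0)) * h y)"
    unfolding sir_rate_def infection_pressure_def sum_distrib_right by (rule sum.swap)
  also have "\<dots> = (\<Sum>m\<in>UNIV. (if x m = Sus then infection_pressure T UNIV x m * h (x(m := Inf)) else 0)
             + (if x m = Inf then gam m * h (x(m := Rem)) else 0))"
  proof (intro sum.cong refl)
    fix m
    show "(\<Sum>y\<in>UNIV. ((if x m = Sus \<and> y = x(m := Inf) then infection_pressure T UNIV x m else 0)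
        + (if x m = Inf \<and> y = x(m := Rem) then gam m else 0)) * h y)
      = (if x m = Sus then infection_pressure T UNIV x m * h (x(m := Inf)) else 0)
        + (if x m = Inf then gam m * h (x(m := Rem)) else 0)"
      by (cases "x m") (simp_all add: if_distrib[of "\<lambda>u. u * h _"] cong: if_cong)
  qed
  finally show ?thesis .
qed

lemma sir_generator_eq_rates:
  fixes x :: "'n::finite \<Rightarrow> sir"
  shows "sir_generator T gam h x
    = (\<Sum>y\<in>UNIV. sir_rate T gam x y * h y) - h x * (\<Sum>z\<in>UNIV. sir_rate T gam x z)"
proof -
  have total_rate: "(\<Sum>z\<in>UNIV. sir_rate T gam x z) = (\<Sum>m\<in>UNIV.
      (if x m = Sus then infection_pressure T UNIV x m else 0) + (if x m = Inf then gam m else 0))"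
    using sum_sir_rate_mult[of T gam x "\<lambda>_. 1"] by (simp cong: if_cong)
  show ?thesis
    unfolding sir_generator_on_def sum_sir_rate_mult total_rate sum_distrib_left sum_subtractf[symmetric]
    by (intro sum.cong refl) (auto simp: algebra_simps)
qed

lemma has_real_derivative_expect:
  assumes forward: "kolmogorov_forward T gam p" and t: "t \<ge> 0"
  shows "((\<lambda>s. expect p s h) has_real_derivative expect p t (sir_generator T gam h)) (at t within {0..})"
proof -
  let ?dp = "\<lambda>y. (\<Sum>x\<in>UNIV. p t x * sir_rate T gam x y) - p t y * (\<Sum>z\<in>UNIV. sir_rate T gam y z)"
  have "((\<lambda>s. expect p s h) has_real_derivative (\<Sum>y\<in>UNIV. ?dp y * h y)) (at t within {0..})"
    unfolding expect_def using forward t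
    by (intro DERIV_sum DERIV_cmult_right) (auto simp: kolmogorov_forward_def)
  moreover have "(\<Sum>y\<in>UNIV. ?dp y * h y) = expect p t (sir_generator T gam h)"
  proof -
    have "(\<Sum>y\<in>UNIV. ?dp y * h y) = (\<Sum>y\<in>UNIV. \<Sum>x\<in>UNIV. p t x * sir_rate T gam x y * h y)
        - (\<Sum>y\<in>UNIV. p t y * h y * (\<Sum>z\<in>UNIV. sir_rate T gam y z))"
      by (simp add: left_diff_distrib sum_subtractf sum_distrib_right sum_distrib_left algebra_simps)
    also have "(\<Sum>y\<in>UNIV. \<Sum>x\<in>UNIV. p t x * sir_rate T gam x y * h y)
        = (\<Sum>x\<in>UNIV. p t x * (\<Sum>y\<in>UNIV. sir_rate T gam x y * h y))"
      by (subst sum.swap) (simp add: sum_distrib_left mult.assoc)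
    finally show ?thesis
      unfolding expect_def sir_generator_eq_rates
      by (simp add: right_diff_distrib sum_subtractf mult.assoc)
  qed
  ultimately show ?thesis by simp
qed

section \<open>Independence across a susceptible node\<close>

definition depends_only_on :: "'n set \<Rightarrow> (('n \<Rightarrow> sir) \<Rightarrow> real) \<Rightarrow> bool" where
  "depends_only_on X \<phi> \<longleftrightarrow> (\<forall>x x'. (\<forall>v\<in>X. x v = x' v) \<longrightarrow> \<phi> x = \<phi> x')"

text \<open>While \<open>c\<close> is susceptible, the nodes of \<open>X\<close> evolve by their own SIR dynamics, and
  the process is killed when they infect \<open>c\<close>.\<close>
definition killed_generator ::
  "('n \<Rightarrow> 'n \<Rightarrow> real) \<Rightarrow> ('n \<Rightarrow> real) \<Rightarrow> 'n \<Rightarrow> 'n set \<Rightarrow> (('n \<Rightarrow> sir) \<Rightarrow> real) \<Rightarrow> ('n \<Rightarrow> sir) \<Rightarrow> real" where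
  "killed_generator T gam c X \<phi> x = sir_generator_on T gam X \<phi> x - infection_pressure T X x c * \<phi> x"

lemma depends_only_on_killed_generator:
  assumes \<phi>: "depends_only_on X \<phi>"
  shows "depends_only_on X (killed_generator T gam c X \<phi>)"
  unfolding depends_only_on_def
proof (intro allI impI)
  fix x x' :: "_ \<Rightarrow> sir" assume agree: "\<forall>v\<in>X. x v = x' v"
  have "infection_pressure T X x m = infection_pressure T X x' m" for m
    unfolding infection_pressure_def using agree by (intro sum.cong) auto
  moreover have "\<phi> x = \<phi> x'" and "\<phi> (x(m := s)) = \<phi> (x'(m := s))" for m s
    using \<phi> agree unfolding depends_only_on_def by auto
  ultimately show "killed_generator T gam c X \<phi> x = killed_generator T gam c X \<phi> x'"
    unfolding killed_generator_def sir_generator_on_def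
    by (intro arg_cong2[where f = "(-)"] sum.cong refl) (use agree in auto)
qed

definition cylinder :: "'n set \<Rightarrow> ('n \<Rightarrow> sir) \<Rightarrow> ('n \<Rightarrow> sir) \<Rightarrow> real" where
  "cylinder X y x = of_bool (\<forall>v\<in>X. x v = y v)"

text \<open>A configuration on \<open>X\<close> is represented by its extension by \<open>Sus\<close> outside \<open>X\<close>.\<close>
definition confs_on :: "'n set \<Rightarrow> ('n \<Rightarrow> sir) set" where
  "confs_on X = {y. \<forall>v. v \<notin> X \<longrightarrow> y v = Sus}"

lemma depends_only_on_cylinder: "depends_only_on X (cylinder X y)"
  unfolding depends_only_on_def cylinder_def by auto

lemma cylinder_confs_on:
  assumes "y \<in> confs_on X" and "y' \<in> confs_on X"
  shows "cylinder X y y' = of_bool (y = y')"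
  using assms unfolding cylinder_def confs_on_def by (auto simp: fun_eq_iff) metis

lemma depends_only_on_expand:
  fixes \<phi> :: "('n::finite \<Rightarrow> sir) \<Rightarrow> real"
  assumes \<phi>: "depends_only_on X \<phi>"
  shows "\<phi> x = (\<Sum>y\<in>confs_on X. \<phi> y * cylinder X y x)"
proof -
  define x0 where "x0 = (\<lambda>v. if v \<in> X then x v else Sus)"
  have "x0 \<in> confs_on X"
    by (simp add: x0_def confs_on_def)
  then have "cylinder X y x = of_bool (y = x0)" if "y \<in> confs_on X" for y
    using that cylinder_confs_on[of y X x0] \<phi> by (auto simp: cylinder_def x0_def)
  then have "(\<Sum>y\<in>confs_on X. \<phi> y * cylinder X y x) = \<phi> x0"
    using \<open>x0 \<in> confs_on X\<close> by (simp add: of_bool_def if_distrib[of "\<lambda>u. _ * u"] cong: sum.cong if_cong)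
  also have "\<phi> x0 = \<phi> x"
    using \<phi> by (auto simp: depends_only_on_def x0_def)
  finally show ?thesis ..
qed

lemma sum_UNIV_split_centre:
  fixes f :: "'n::finite \<Rightarrow> 'b::comm_monoid_add"
  assumes "c \<notin> A"
  shows "sum f UNIV = f c + sum f A + sum f (- insert c A)"
proof -
  have "sum f UNIV = sum f (insert c (A \<union> - insert c A))"
    by (rule arg_cong[where f = "sum f"]) auto
  also have "\<dots> = f c + sum f (A \<union> - insert c A)"
    using assms by simp
  also have "sum f (A \<union> - insert c A) = sum f A + sum f (- insert c A)"
    by (rule sum.union_disjoint) auto
  finally show ?thesis by (simp add: add.assoc)
qed

lemma prod_UNIV_split_centre:
  fixes f :: "'n::finite \<Rightarrow> 'b::comm_monoid_mult"
  assumes "c \<notin> A"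
  shows "prod f UNIV = f c * prod f A * prod f (- insert c A)"
proof -
  have "prod f UNIV = prod f (insert c (A \<union> - insert c A))"
    by (rule arg_cong[where f = "prod f"]) auto
  also have "\<dots> = f c * prod f (A \<union> - insert c A)"
    using assms by simp
  also have "prod f (A \<union> - insert c A) = prod f A * prod f (- insert c A)"
    by (rule prod.union_disjoint) auto
  finally show ?thesis by (simp add: mult.assoc)
qed

context
  fixes T :: "'n::finite \<Rightarrow> 'n \<Rightarrow> real" and c :: 'n and A :: "'n set"
  assumes sep: "separates T c A"
begin

lemma infection_pressure_split:
  assumes "x c = Sus"
  shows "infection_pressure T UNIV x m = infection_pressure T A x m + infection_pressure T (- insert c A) x m"
  using assms sep unfolding infection_pressure_def separates_def by (subst sum_UNIV_split_centre) auto

lemma infection_pressure_across_zero: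
  shows "m \<in> A \<Longrightarrow> infection_pressure T (- insert c A) x m = 0"
    and "m \<in> - insert c A \<Longrightarrow> infection_pressure T A x m = 0"
  using sep unfolding infection_pressure_def separates_def by (auto intro!: sum.neutral)

lemma sir_generator_susceptible_product:
  assumes \<phi>: "depends_only_on A \<phi>" and \<psi>: "depends_only_on (- insert c A) \<psi>"
  shows "sir_generator T gam (\<lambda>x. of_bool (x c = Sus) * \<phi> x * \<psi> x) x
    = of_bool (x c = Sus) *
      (killed_generator T gam c A \<phi> x * \<psi> x + \<phi> x * killed_generator T gam c (- insert c A) \<psi> x)"
proof (cases "x c = Sus")
  case False
  then show ?thesis
    unfolding sir_generator_on_def by (auto intro!: sum.neutral)
next
  case True
  let ?B = "- insert c A"
  let ?h = "\<lambda>x. of_bool (x c = Sus) * \<phi> x * \<psi> x"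
  let ?F = "\<lambda>m. (if x m = Sus then infection_pressure T UNIV x m * (?h (x(m := Inf)) - ?h x) else 0)
       + (if x m = Inf then gam m * (?h (x(m := Rem)) - ?h x) else 0)"
  let ?G = "\<lambda>X h m. (if x m = Sus then infection_pressure T X x m * (h (x(m := Inf)) - h x) else 0)
       + (if x m = Inf then gam m * (h (x(m := Rem)) - h x) else 0)"
  have cA: "c \<notin> A" using sep by (simp add: separates_def)
  have "?F c = - (infection_pressure T A x c + infection_pressure T ?B x c) * \<phi> x * \<psi> x"
    using True infection_pressure_split[of x, OF True] by (simp add: algebra_simps)
  moreover have "(\<Sum>m\<in>A. ?F m) = \<psi> x * (\<Sum>m\<in>A. ?G A \<phi> m)"
    unfolding sum_distrib_left
  proof (intro sum.cong refl)
    fix m assume m: "m \<in> A"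
    have "\<psi> (x(m := s)) = \<psi> x" for s
      using \<psi> m unfolding depends_only_on_def by auto
    moreover have "m \<noteq> c" using m cA by auto
    ultimately show "?F m = \<psi> x * ?G A \<phi> m"
      using True infection_pressure_split[of x, OF True, of m] infection_pressure_across_zero(1)[OF m]
      by (simp add: algebra_simps)
  qed
  moreover have "(\<Sum>m\<in>?B. ?F m) = \<phi> x * (\<Sum>m\<in>?B. ?G ?B \<psi> m)"
    unfolding sum_distrib_left
  proof (intro sum.cong refl)
    fix m assume m: "m \<in> ?B"
    have "\<phi> (x(m := s)) = \<phi> x" for s
      using \<phi> m unfolding depends_only_on_def by auto
    moreover have "m \<noteq> c" using m by auto
    ultimately show "?F m = \<phi> x * ?G ?B \<psi> m"
      using True infection_pressure_split[of x, OF True, of m] infection_pressure_across_zero(2)[OF m]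
      by (simp add: algebra_simps)
  qed
  ultimately show ?thesis
    unfolding sir_generator_on_def killed_generator_def sum_UNIV_split_centre[OF cA, of ?F]
    using True by (simp add: algebra_simps)
qed

end


lemma has_real_derivative_expect_sus_product:
  assumes sep: "separates T c A" and forward: "kolmogorov_forward T gam p" and t: "t \<ge> 0"
    and \<phi>: "depends_only_on A \<phi>" and \<psi>: "depends_only_on (- insert c A) \<psi>"
  shows "((\<lambda>s. expect p s (\<lambda>x. of_bool (x c = Sus) * \<phi> x * \<psi> x)) has_real_derivative
      expect p t (\<lambda>x. of_bool (x c = Sus) * killed_generator T gam c A \<phi> x * \<psi> x)
    + expect p t (\<lambda>x. of_bool (x c = Sus) * \<phi> x * killed_generator T gam c (- insert c A) \<psi> x))
    (at t within {0..})"
proof -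
  have "expect p t (sir_generator T gam (\<lambda>x. of_bool (x c = Sus) * \<phi> x * \<psi> x))
    = expect p t (\<lambda>x. of_bool (x c = Sus) * killed_generator T gam c A \<phi> x * \<psi> x)
    + expect p t (\<lambda>x. of_bool (x c = Sus) * \<phi> x * killed_generator T gam c (- insert c A) \<psi> x)"
    unfolding sir_generator_susceptible_product[OF sep \<phi> \<psi>] expect_add[symmetric]
    by (simp add: algebra_simps)
  then show ?thesis
    using has_real_derivative_expect[OF forward t, of "\<lambda>x. of_bool (x c = Sus) * \<phi> x * \<psi> x"]
    by simp
qed

definition sus_cell ::
  "(real \<Rightarrow> ('n::finite \<Rightarrow> sir) \<Rightarrow> real) \<Rightarrow> 'n \<Rightarrow> 'n set \<Rightarrow> real \<Rightarrow> ('n \<Rightarrow> sir) \<Rightarrow> ('n \<Rightarrow> sir) \<Rightarrow> real"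
  where "sus_cell p c A t y z =
    expect p t (\<lambda>x. of_bool (x c = Sus) * cylinder A y x * cylinder (- insert c A) z x)"

lemma expect_sus_product_expand:
  fixes p :: "real \<Rightarrow> ('n::finite \<Rightarrow> sir) \<Rightarrow> real"
  assumes \<phi>: "depends_only_on A \<phi>" and \<psi>: "depends_only_on (- insert c A) \<psi>"
  shows "expect p t (\<lambda>x. of_bool (x c = Sus) * \<phi> x * \<psi> x)
    = (\<Sum>y\<in>confs_on A. \<Sum>z\<in>confs_on (- insert c A). \<phi> y * \<psi> z * sus_cell p c A t y z)"
proof -
  let ?cell = "\<lambda>y z x. of_bool (x c = Sus) * cylinder A y x * cylinder (- insert c A) z x"
  have "of_bool (x c = Sus) * \<phi> x * \<psi> x
      = (\<Sum>y\<in>confs_on A. \<Sum>z\<in>confs_on (- insert c A). \<phi> y * \<psi> z * ?cell y z x)" for x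
    using depends_only_on_expand[OF \<phi>, of x] depends_only_on_expand[OF \<psi>, of x]
    by (simp add: sum_distrib_left sum_distrib_right mult_ac)
  then show ?thesis
    by (simp add: expect_sum expect_cmult sus_cell_def)
qed

lemma sus_cell_initial:
  assumes init: "\<forall>x. p 0 x = (\<Prod>i\<in>UNIV. pi0 i (x i))" and cA: "c \<notin> A"
  shows "sus_cell p c A 0 y z = pi0 c Sus * (\<Prod>v\<in>A. pi0 v (y v)) * (\<Prod>v\<in>- insert c A. pi0 v (z v))"
proof -
  define x0 where "x0 = (\<lambda>v. if v \<in> A then y v else if v = c then Sus else z v)"
  have "of_bool (x c = Sus) * cylinder A y x * cylinder (- insert c A) z x = of_bool (x = x0)" for x
    using cA unfolding x0_def cylinder_def by (auto simp: fun_eq_iff)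
  then have "sus_cell p c A 0 y z = p 0 x0"
    by (simp add: sus_cell_def expect_def)
  also have "\<dots> = pi0 c (x0 c) * (\<Prod>v\<in>A. pi0 v (x0 v)) * (\<Prod>v\<in>- insert c A. pi0 v (x0 v))"
    using init prod_UNIV_split_centre[OF cA] by simp
  also have "\<dots> = pi0 c Sus * (\<Prod>v\<in>A. pi0 v (y v)) * (\<Prod>v\<in>- insert c A. pi0 v (z v))"
    using cA by (auto simp: x0_def intro!: arg_cong2[where f = "(*)"] prod.cong)
  finally show ?thesis .
qed


lemma sum_confs_on_cylinder:
  fixes f :: "('n::finite \<Rightarrow> sir) \<Rightarrow> real"
  assumes "z \<in> confs_on X"
  shows "(\<Sum>z'\<in>confs_on X. cylinder X z z' * f z') = f z"
proof -
  have "(\<Sum>z'\<in>confs_on X. cylinder X z z' * f z') = (\<Sum>z'\<in>confs_on X. if z = z' then f z' else 0)"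
    using cylinder_confs_on[OF assms] by (intro sum.cong refl) simp
  then show ?thesis using assms by simp
qed

lemma sus_cell_rank_one:
  assumes sep: "separates T c A" and forward: "kolmogorov_forward T gam p"
    and init: "\<forall>x. p 0 x = (\<Prod>i\<in>UNIV. pi0 i (x i))" and t: "t \<ge> 0"
    and "y \<in> confs_on A" "z \<in> confs_on (- insert c A)" "y' \<in> confs_on A" "z' \<in> confs_on (- insert c A)"
  shows "sus_cell p c A t y z * sus_cell p c A t y' z' = sus_cell p c A t y z' * sus_cell p c A t y' z"
proof (rule sylvester_ode_rank_one[where M = "sus_cell p c A" and Y = "confs_on A" and Z = "confs_on (- insert c A)"
      and \<alpha> = "\<lambda>y. killed_generator T gam c A (cylinder A y)"
      and \<beta> = "\<lambda>z. killed_generator T gam c (- insert c A) (cylinder (- insert c A) z)"])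
  let ?B = "- insert c A"
  fix s :: real and y z assume s: "s \<ge> 0" and y: "y \<in> confs_on A" and z: "z \<in> confs_on ?B"
  have "expect p s (\<lambda>x. of_bool (x c = Sus) * killed_generator T gam c A (cylinder A y) x * cylinder ?B z x)
      = (\<Sum>y2\<in>confs_on A. killed_generator T gam c A (cylinder A y) y2 * sus_cell p c A s y2 z)"
    using expect_sus_product_expand[where \<phi> = "killed_generator T gam c A (cylinder A y)"
        and \<psi> = "cylinder ?B z" and p = p and t = s,
        OF depends_only_on_killed_generator[OF depends_only_on_cylinder] depends_only_on_cylinder]
    by (simp add: mult.assoc sum_distrib_left[symmetric] sum_confs_on_cylinder[OF z])
  moreover have "expect p s (\<lambda>x. of_bool (x c = Sus) * cylinder A y x * killed_generator T gam c ?B (cylinder ?B z) x)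
      = (\<Sum>z2\<in>confs_on ?B. killed_generator T gam c ?B (cylinder ?B z) z2 * sus_cell p c A s y z2)"
    (is "?lhs = (\<Sum>z2\<in>_. ?K z2 * _)")
  proof -
    have "?lhs = (\<Sum>y2\<in>confs_on A. \<Sum>z2\<in>confs_on ?B. cylinder A y y2 * ?K z2 * sus_cell p c A s y2 z2)"
      using expect_sus_product_expand[where \<phi> = "cylinder A y" and \<psi> = ?K and p = p and t = s,
          OF depends_only_on_cylinder depends_only_on_killed_generator[OF depends_only_on_cylinder]]
      by simp
    also have "\<dots> = (\<Sum>z2\<in>confs_on ?B. \<Sum>y2\<in>confs_on A. cylinder A y y2 * (?K z2 * sus_cell p c A s y2 z2))"
      by (subst sum.swap) (simp add: mult.assoc)
    finally show ?thesis
      by (simp add: sum_confs_on_cylinder[OF y])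
  qed
  ultimately show "((\<lambda>s. sus_cell p c A s y z) has_real_derivative
      (\<Sum>y2\<in>confs_on A. killed_generator T gam c A (cylinder A y) y2 * sus_cell p c A s y2 z)
    + (\<Sum>z2\<in>confs_on ?B. killed_generator T gam c ?B (cylinder ?B z) z2 * sus_cell p c A s y z2))
    (at s within {0..})"
    using has_real_derivative_expect_sus_product[OF sep forward s
        depends_only_on_cylinder[of A y] depends_only_on_cylinder[of ?B z]]
    by (simp add: sus_cell_def)
next
  have "c \<notin> A" using sep by (simp add: separates_def)
  then show "sus_cell p c A 0 y z * sus_cell p c A 0 y' z' = sus_cell p c A 0 y z' * sus_cell p c A 0 y' z"
    for y z y' z'
    by (simp add: sus_cell_initial[of p pi0, OF init] mult_ac)
qed (use assms in auto)

lemma rank_one_weighted_sums: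
  fixes M :: "'a \<Rightarrow> 'b \<Rightarrow> real"
  assumes rank_one: "\<And>y z y' z'. y \<in> Y \<Longrightarrow> z \<in> Z \<Longrightarrow> y' \<in> Y \<Longrightarrow> z' \<in> Z \<Longrightarrow>
      M y z * M y' z' = M y z' * M y' z"
  shows "(\<Sum>y\<in>Y. \<Sum>z\<in>Z. f y * g z * M y z) * (\<Sum>y\<in>Y. \<Sum>z\<in>Z. M y z)
    = (\<Sum>y\<in>Y. \<Sum>z\<in>Z. f y * M y z) * (\<Sum>y\<in>Y. \<Sum>z\<in>Z. g z * M y z)"
proof -
  let ?total = "\<Sum>y\<in>Y. \<Sum>z\<in>Z. M y z"
  have row_col: "M y z * ?total = (\<Sum>z'\<in>Z. M y z') * (\<Sum>y'\<in>Y. M y' z)" if "y \<in> Y" "z \<in> Z" for y z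
  proof -
    have "M y z * ?total = (\<Sum>y'\<in>Y. \<Sum>z'\<in>Z. M y z' * M y' z)"
      unfolding sum_distrib_left using rank_one that by (intro sum.cong refl) auto
    also have "\<dots> = (\<Sum>z'\<in>Z. M y z') * (\<Sum>y'\<in>Y. M y' z)"
      unfolding sum_product by (rule sum.swap)
    finally show ?thesis .
  qed
  have "(\<Sum>y\<in>Y. \<Sum>z\<in>Z. f y * g z * M y z) * ?total = (\<Sum>y\<in>Y. \<Sum>z\<in>Z. f y * g z * (M y z * ?total))"
    by (simp add: sum_distrib_right mult.assoc)
  also have "\<dots> = (\<Sum>y\<in>Y. \<Sum>z\<in>Z. (f y * (\<Sum>z'\<in>Z. M y z')) * (g z * (\<Sum>y'\<in>Y. M y' z)))"
    using row_col by (intro sum.cong refl) (simp add: mult_ac)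
  also have "\<dots> = (\<Sum>y\<in>Y. f y * (\<Sum>z'\<in>Z. M y z')) * (\<Sum>z\<in>Z. g z * (\<Sum>y'\<in>Y. M y' z))"
    by (simp add: sum_product)
  also have "\<dots> = (\<Sum>y\<in>Y. \<Sum>z\<in>Z. f y * M y z) * (\<Sum>y\<in>Y. \<Sum>z\<in>Z. g z * M y z)"
    by (simp add: sum_distrib_left sum.swap[of _ Y])
  finally show ?thesis .
qed


lemma susceptible_centre_factorization:
  assumes sep: "separates T c A" and forward: "kolmogorov_forward T gam p"
    and init: "\<forall>x. p 0 x = (\<Prod>i\<in>UNIV. pi0 i (x i))" and t: "t \<ge> 0"
    and \<phi>: "depends_only_on A \<phi>" and \<psi>: "depends_only_on (- insert c A) \<psi>"
  shows "expect p t (\<lambda>x. of_bool (x c = Sus) * \<phi> x * \<psi> x) * expect p t (\<lambda>x. of_bool (x c = Sus))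
    = expect p t (\<lambda>x. of_bool (x c = Sus) * \<phi> x) * expect p t (\<lambda>x. of_bool (x c = Sus) * \<psi> x)"
proof -
  have one: "depends_only_on X (\<lambda>_. 1)" for X
    by (simp add: depends_only_on_def)
  show ?thesis
    using expect_sus_product_expand[where p = p and t = t, OF \<phi> \<psi>]
      expect_sus_product_expand[where p = p and t = t and A = A and c = c, OF one one]
      expect_sus_product_expand[where p = p and t = t and c = c, OF \<phi> one]
      expect_sus_product_expand[where p = p and t = t and A = A, OF one \<psi>]
      rank_one_weighted_sums[where f = \<phi> and g = \<psi>, OF sus_cell_rank_one[OF sep forward init t]]
    by simp
qed


section \<open>Exactness of the pair closure on trees\<close>

lemma sir_rate_nonneg:
  assumes "\<forall>i j. T i j \<ge> 0" and "\<forall>i. gam i \<ge> 0"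
  shows "sir_rate T gam x y \<ge> 0"
  unfolding sir_rate_def using assms by (intro sum_nonneg add_nonneg_nonneg) (auto intro: sum_nonneg)

lemma kolmogorov_forward_nonneg:
  fixes p :: "real \<Rightarrow> ('n::finite \<Rightarrow> sir) \<Rightarrow> real"
  assumes T_nonneg: "\<forall>i j. T i j \<ge> 0" and gam_nonneg: "\<forall>i. gam i \<ge> 0"
    and pi0_nonneg: "\<forall>i s. pi0 i s \<ge> 0" and init: "\<forall>x. p 0 x = (\<Prod>i\<in>UNIV. pi0 i (x i))"
    and forward: "kolmogorov_forward T gam p" and t: "t \<ge> 0"
  shows "p t x \<ge> 0"
proof -
  let ?m = "\<lambda>y x. sir_rate T gam x y - (if x = y then (\<Sum>z\<in>UNIV. sir_rate T gam y z) else 0)"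
  show ?thesis
  proof (rule metzler_ode_nonneg[where m = ?m, OF _ _ _ t])
    fix s :: real and y assume s: "s \<ge> 0"
    have "(\<Sum>x\<in>UNIV. ?m y x * p s x) = (\<Sum>x\<in>UNIV.
        p s x * sir_rate T gam x y - (if x = y then p s y * (\<Sum>z\<in>UNIV. sir_rate T gam y z) else 0))"
      by (intro sum.cong refl) (auto simp: algebra_simps)
    also have "\<dots> = (\<Sum>x\<in>UNIV. p s x * sir_rate T gam x y) - p s y * (\<Sum>z\<in>UNIV. sir_rate T gam y z)"
      by (simp add: sum_subtractf)
    finally show "((\<lambda>s. p s y) has_real_derivative (\<Sum>x\<in>UNIV. ?m y x * p s x)) (at s within {0..})"
      using forward s unfolding kolmogorov_forward_def by simp
  next
    show "?m y x \<ge> 0" if "y \<noteq> x" for y x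
      using that sir_rate_nonneg[OF T_nonneg gam_nonneg] by simp
  next
    show "p 0 y \<ge> 0" for y
      using init pi0_nonneg by (simp add: prod_nonneg)
  qed
qed

lemma expt_nonneg: "(\<And>x. p t x \<ge> 0) \<Longrightarrow> expt p t P \<ge> 0"
  unfolding expt_def by (intro sum_nonneg) auto

lemma expt_mono: "(\<And>x. p t x \<ge> 0) \<Longrightarrow> (\<And>x. P x \<Longrightarrow> Q x) \<Longrightarrow> expt p t P \<le> expt p t Q"
  unfolding expt_def by (intro sum_mono) auto

definition pair_closure_exact :: "('n::finite \<Rightarrow> 'n \<Rightarrow> real) \<Rightarrow> (real \<Rightarrow> ('n \<Rightarrow> sir) \<Rightarrow> real) \<Rightarrow> real \<Rightarrow> bool" where
  "pair_closure_exact T p t \<longleftrightarrow> (\<forall>c a b sa sb. und_adj T c a \<longrightarrow> und_adj T c b \<longrightarrow> a \<noteq> b \<longrightarrow>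
     expt p t (\<lambda>x. x c = Sus \<and> x a = sa \<and> x b = sb)
     = frac (expt p t (\<lambda>x. x c = Sus \<and> x a = sa) * expt p t (\<lambda>x. x c = Sus \<and> x b = sb))
            (expt p t (\<lambda>x. x c = Sus)))"

lemma tree_network_pair_closure_exact:
  assumes T_nonneg: "\<forall>i j. T i j \<ge> 0" and tree: "tree_network T"
    and init: "\<forall>x. p 0 x = (\<Prod>i\<in>UNIV. pi0 i (x i))" and forward: "kolmogorov_forward T gam p"
    and t: "t \<ge> 0" and p_nonneg: "\<And>x. p t x \<ge> 0"
  shows "pair_closure_exact T p t"
  unfolding pair_closure_exact_def
proof (intro allI impI)
  fix c a b sa sb assume ca: "und_adj T c a" and cb: "und_adj T c b" and "a \<noteq> b"
  obtain A where "a \<in> A" "b \<notin> A" and sep: "separates T c A"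
    using tree_network_separates[OF T_nonneg tree ca cb \<open>a \<noteq> b\<close>] by blast
  moreover have "b \<noteq> c" using cb by (auto simp: und_adj_def)
  ultimately have "depends_only_on A (\<lambda>x. of_bool (x a = sa))"
    and "depends_only_on (- insert c A) (\<lambda>x. of_bool (x b = sb))"
    by (auto simp: depends_only_on_def)
  from susceptible_centre_factorization[OF sep forward init t this]
  have factor: "expt p t (\<lambda>x. x c = Sus \<and> x a = sa \<and> x b = sb) * expt p t (\<lambda>x. x c = Sus)
      = expt p t (\<lambda>x. x c = Sus \<and> x a = sa) * expt p t (\<lambda>x. x c = Sus \<and> x b = sb)"
    by (simp add: expt_eq_expect of_bool_conj mult.assoc)
  show "expt p t (\<lambda>x. x c = Sus \<and> x a = sa \<and> x b = sb)
      = frac (expt p t (\<lambda>x. x c = Sus \<and> x a = sa) * expt p t (\<lambda>x. x c = Sus \<and> x b = sb))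
             (expt p t (\<lambda>x. x c = Sus))"
  proof (cases "expt p t (\<lambda>x. x c = Sus) = 0")
    case True
    have "0 \<le> expt p t (\<lambda>x. x c = Sus \<and> x a = sa \<and> x b = sb)"
      using p_nonneg by (rule expt_nonneg)
    moreover have "expt p t (\<lambda>x. x c = Sus \<and> x a = sa \<and> x b = sb) \<le> expt p t (\<lambda>x. x c = Sus)"
      using p_nonneg by (rule expt_mono) simp
    ultimately show ?thesis using True by (simp add: frac_def)
  next
    case False
    with factor show ?thesis by (simp add: frac_def field_simps)
  qed
qed


section \<open>Moment equations\<close>

lemma of_bool_mult_infection_pressure:
  "of_bool P * infection_pressure T X x m = (\<Sum>k\<in>X. T m k * of_bool (P \<and> x k = Inf))"
  unfolding infection_pressure_def sum_distrib_left by (intro sum.cong refl) auto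

lemma sir_generator_Sus:
  fixes T :: "'n::finite \<Rightarrow> 'n \<Rightarrow> real"
  shows "sir_generator T gam (\<lambda>x. of_bool (x i = Sus))
    = (\<lambda>x. - (\<Sum>k\<in>UNIV. T i k * of_bool (x i = Sus \<and> x k = Inf)))"
proof
  fix x :: "'n \<Rightarrow> sir"
  have "sir_generator T gam (\<lambda>x. of_bool (x i = Sus)) x = - (of_bool (x i = Sus) * infection_pressure T UNIV x i)"
    unfolding sir_generator_on_def by (subst sum.mono_neutral_right[of UNIV "{i}"]) auto
  then show "sir_generator T gam (\<lambda>x. of_bool (x i = Sus)) x = - (\<Sum>k\<in>UNIV. T i k * of_bool (x i = Sus \<and> x k = Inf))"
    unfolding of_bool_mult_infection_pressure .
qed


lemma sir_generator_Inf:
  fixes T :: "'n::finite \<Rightarrow> 'n \<Rightarrow> real"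
  shows "sir_generator T gam (\<lambda>x. of_bool (x i = Inf))
    = (\<lambda>x. (\<Sum>k\<in>UNIV. T i k * of_bool (x i = Sus \<and> x k = Inf)) - gam i * of_bool (x i = Inf))"
proof
  fix x :: "'n \<Rightarrow> sir"
  have "sir_generator T gam (\<lambda>x. of_bool (x i = Inf)) x
      = of_bool (x i = Sus) * infection_pressure T UNIV x i - gam i * of_bool (x i = Inf)"
    unfolding sir_generator_on_def by (subst sum.mono_neutral_right[of UNIV "{i}"]) auto
  then show "sir_generator T gam (\<lambda>x. of_bool (x i = Inf)) x
      = (\<Sum>k\<in>UNIV. T i k * of_bool (x i = Sus \<and> x k = Inf)) - gam i * of_bool (x i = Inf)"
    unfolding of_bool_mult_infection_pressure .
qed

lemma sir_generator_Sus_Inf: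
  fixes T :: "'n::finite \<Rightarrow> 'n \<Rightarrow> real"
  assumes "i \<noteq> j"
  shows "sir_generator T gam (\<lambda>x. of_bool (x i = Sus \<and> x j = Inf))
    = (\<lambda>x. (\<Sum>k\<in>UNIV. T j k * of_bool (x j = Sus \<and> x i = Sus \<and> x k = Inf))
         - (\<Sum>k\<in>UNIV. T i k * of_bool (x i = Sus \<and> x j = Inf \<and> x k = Inf))
         - gam j * of_bool (x i = Sus \<and> x j = Inf))"
proof
  fix x :: "'n \<Rightarrow> sir"
  have "sir_generator T gam (\<lambda>x. of_bool (x i = Sus \<and> x j = Inf)) x
      = of_bool (x j = Sus \<and> x i = Sus) * infection_pressure T UNIV x j
      - of_bool (x i = Sus \<and> x j = Inf) * infection_pressure T UNIV x i
      - gam j * of_bool (x i = Sus \<and> x j = Inf)"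
    unfolding sir_generator_on_def using assms
    by (subst sum.mono_neutral_right[of UNIV "{i, j}"]) auto
  then show "sir_generator T gam (\<lambda>x. of_bool (x i = Sus \<and> x j = Inf)) x
      = (\<Sum>k\<in>UNIV. T j k * of_bool (x j = Sus \<and> x i = Sus \<and> x k = Inf))
      - (\<Sum>k\<in>UNIV. T i k * of_bool (x i = Sus \<and> x j = Inf \<and> x k = Inf))
      - gam j * of_bool (x i = Sus \<and> x j = Inf)"
    unfolding of_bool_mult_infection_pressure conj_assoc .
qed

lemma sir_generator_Sus_Sus:
  fixes T :: "'n::finite \<Rightarrow> 'n \<Rightarrow> real"
  assumes "i \<noteq> j"
  shows "sir_generator T gam (\<lambda>x. of_bool (x i = Sus \<and> x j = Sus))
    = (\<lambda>x. - (\<Sum>k\<in>UNIV. T i k * of_bool (x i = Sus \<and> x j = Sus \<and> x k = Inf))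
         - (\<Sum>k\<in>UNIV. T j k * of_bool (x j = Sus \<and> x i = Sus \<and> x k = Inf)))"
proof
  fix x :: "'n \<Rightarrow> sir"
  have "sir_generator T gam (\<lambda>x. of_bool (x i = Sus \<and> x j = Sus)) x
      = - (of_bool (x i = Sus \<and> x j = Sus) * infection_pressure T UNIV x i)
      - of_bool (x j = Sus \<and> x i = Sus) * infection_pressure T UNIV x j"
    unfolding sir_generator_on_def using assms
    by (subst sum.mono_neutral_right[of UNIV "{i, j}"]) auto
  then show "sir_generator T gam (\<lambda>x. of_bool (x i = Sus \<and> x j = Sus)) x
      = - (\<Sum>k\<in>UNIV. T i k * of_bool (x i = Sus \<and> x j = Sus \<and> x k = Inf))
      - (\<Sum>k\<in>UNIV. T j k * of_bool (x j = Sus \<and> x i = Sus \<and> x k = Inf))"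
    unfolding of_bool_mult_infection_pressure conj_assoc .
qed


lemma has_real_derivative_expt_Sus:
  assumes forward: "kolmogorov_forward T gam p" and t: "t \<ge> 0"
  shows "((\<lambda>s. expt p s (\<lambda>x. x i = Sus)) has_real_derivative
      - (\<Sum>j\<in>UNIV. T i j * expt p t (\<lambda>x. x i = Sus \<and> x j = Inf))) (at t within {0..})"
  using has_real_derivative_expect[OF forward t, of "\<lambda>x. of_bool (x i = Sus)"]
  unfolding sir_generator_Sus expect_linear expt_eq_expect .

lemma has_real_derivative_expt_Inf:
  assumes forward: "kolmogorov_forward T gam p" and t: "t \<ge> 0"
  shows "((\<lambda>s. expt p s (\<lambda>x. x i = Inf)) has_real_derivative
      (\<Sum>j\<in>UNIV. T i j * expt p t (\<lambda>x. x i = Sus \<and> x j = Inf)) - gam i * expt p t (\<lambda>x. x i = Inf))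
    (at t within {0..})"
  using has_real_derivative_expect[OF forward t, of "\<lambda>x. of_bool (x i = Inf)"]
  unfolding sir_generator_Inf expect_linear expt_eq_expect .

lemma sum_rates_pair_closure_exact:
  assumes closure: "pair_closure_exact T p t"
    and T_nonneg: "\<forall>i j. T i j \<ge> 0" and T_diag: "\<forall>i. T i i = 0" and ca: "und_adj T c a"
  shows "(\<Sum>k\<in>UNIV. T c k * expt p t (\<lambda>x. x c = Sus \<and> x a = s \<and> x k = Inf))
    = T c a * expt p t (\<lambda>x. x c = Sus \<and> x a = s \<and> s = Inf)
    + (\<Sum>k\<in>UNIV - {a}. T c k * frac (expt p t (\<lambda>x. x c = Sus \<and> x a = s) * expt p t (\<lambda>x. x c = Sus \<and> x k = Inf))
                                   (expt p t (\<lambda>x. x c = Sus)))"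
proof -
  have off_a: "T c k * expt p t (\<lambda>x. x c = Sus \<and> x a = s \<and> x k = Inf)
      = T c k * frac (expt p t (\<lambda>x. x c = Sus \<and> x a = s) * expt p t (\<lambda>x. x c = Sus \<and> x k = Inf))
                     (expt p t (\<lambda>x. x c = Sus))" if "k \<noteq> a" for k
  proof (cases "T c k = 0")
    case False
    then have "und_adj T c k"
      using T_nonneg T_diag by (auto simp: und_adj_def order.strict_iff_order)
    then show ?thesis
      using closure ca that unfolding pair_closure_exact_def by auto
  qed simp
  have "(\<Sum>k\<in>UNIV. T c k * expt p t (\<lambda>x. x c = Sus \<and> x a = s \<and> x k = Inf))
    = T c a * expt p t (\<lambda>x. x c = Sus \<and> x a = s \<and> x a = Inf)
    + (\<Sum>k\<in>UNIV - {a}. T c k * expt p t (\<lambda>x. x c = Sus \<and> x a = s \<and> x k = Inf))"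
    by (rule sum.remove) simp_all
  also have "expt p t (\<lambda>x. x c = Sus \<and> x a = s \<and> x a = Inf) = expt p t (\<lambda>x. x c = Sus \<and> x a = s \<and> s = Inf)"
    by (rule arg_cong[where f = "expt p t"]) auto
  also have "(\<Sum>k\<in>UNIV - {a}. T c k * expt p t (\<lambda>x. x c = Sus \<and> x a = s \<and> x k = Inf))
    = (\<Sum>k\<in>UNIV - {a}. T c k * frac (expt p t (\<lambda>x. x c = Sus \<and> x a = s) * expt p t (\<lambda>x. x c = Sus \<and> x k = Inf))
                                   (expt p t (\<lambda>x. x c = Sus)))"
    by (intro sum.cong refl off_a) simp
  finally show ?thesis .
qed


lemma expt_False: "expt p t (\<lambda>_. False) = 0"
  by (simp add: expt_def)

lemma has_real_derivative_expt_Sus_Inf: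
  assumes forward: "kolmogorov_forward T gam p" and t: "t \<ge> 0"
    and T_nonneg: "\<forall>i j. T i j \<ge> 0" and T_diag: "\<forall>i. T i i = 0"
    and closure: "pair_closure_exact T p t" and ij: "und_adj T i j"
  shows "((\<lambda>s. expt p s (\<lambda>x. x i = Sus \<and> x j = Inf)) has_real_derivative
         (\<Sum>k\<in>UNIV - {i}. T j k * frac (expt p t (\<lambda>x. x i = Sus \<and> x j = Sus) * expt p t (\<lambda>x. x j = Sus \<and> x k = Inf))
                                         (expt p t (\<lambda>x. x j = Sus)))
       - (\<Sum>k\<in>UNIV - {j}. T i k * frac (expt p t (\<lambda>x. x i = Sus \<and> x k = Inf) * expt p t (\<lambda>x. x i = Sus \<and> x j = Inf))
                                         (expt p t (\<lambda>x. x i = Sus)))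
       - T i j * expt p t (\<lambda>x. x i = Sus \<and> x j = Inf)
       - gam j * expt p t (\<lambda>x. x i = Sus \<and> x j = Inf)) (at t within {0..})"
proof -
  have "i \<noteq> j" and ji: "und_adj T j i"
    using ij by (auto simp: und_adj_def)
  have "((\<lambda>s. expt p s (\<lambda>x. x i = Sus \<and> x j = Inf)) has_real_derivative
        (\<Sum>k\<in>UNIV. T j k * expt p t (\<lambda>x. x j = Sus \<and> x i = Sus \<and> x k = Inf))
      - (\<Sum>k\<in>UNIV. T i k * expt p t (\<lambda>x. x i = Sus \<and> x j = Inf \<and> x k = Inf))
      - gam j * expt p t (\<lambda>x. x i = Sus \<and> x j = Inf)) (at t within {0..})"
    using has_real_derivative_expect[OF forward t, of "\<lambda>x. of_bool (x i = Sus \<and> x j = Inf)"]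
    unfolding sir_generator_Sus_Inf[OF \<open>i \<noteq> j\<close>] expect_linear expt_eq_expect .
  then show ?thesis
    by (rule DERIV_cong)
      (unfold sum_rates_pair_closure_exact[OF closure T_nonneg T_diag ji, of Sus]
        sum_rates_pair_closure_exact[OF closure T_nonneg T_diag ij, of Inf],
       simp add: expt_False conj_commute mult.commute)
qed

lemma has_real_derivative_expt_Sus_Sus:
  assumes forward: "kolmogorov_forward T gam p" and t: "t \<ge> 0"
    and T_nonneg: "\<forall>i j. T i j \<ge> 0" and T_diag: "\<forall>i. T i i = 0"
    and closure: "pair_closure_exact T p t" and ij: "und_adj T i j"
  shows "((\<lambda>s. expt p s (\<lambda>x. x i = Sus \<and> x j = Sus)) has_real_derivative
         - (\<Sum>k\<in>UNIV - {j}. T i k * frac (expt p t (\<lambda>x. x i = Sus \<and> x j = Sus) * expt p t (\<lambda>x. x i = Sus \<and> x k = Inf))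
                                         (expt p t (\<lambda>x. x i = Sus)))
         - (\<Sum>k\<in>UNIV - {i}. T j k * frac (expt p t (\<lambda>x. x i = Sus \<and> x j = Sus) * expt p t (\<lambda>x. x j = Sus \<and> x k = Inf))
                                         (expt p t (\<lambda>x. x j = Sus)))) (at t within {0..})"
proof -
  have "i \<noteq> j" and ji: "und_adj T j i"
    using ij by (auto simp: und_adj_def)
  have "((\<lambda>s. expt p s (\<lambda>x. x i = Sus \<and> x j = Sus)) has_real_derivative
      - (\<Sum>k\<in>UNIV. T i k * expt p t (\<lambda>x. x i = Sus \<and> x j = Sus \<and> x k = Inf))
      - (\<Sum>k\<in>UNIV. T j k * expt p t (\<lambda>x. x j = Sus \<and> x i = Sus \<and> x k = Inf))) (at t within {0..})"
    using has_real_derivative_expect[OF forward t, of "\<lambda>x. of_bool (x i = Sus \<and> x j = Sus)"]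
    unfolding sir_generator_Sus_Sus[OF \<open>i \<noteq> j\<close>] expect_linear expt_eq_expect .
  then show ?thesis
    by (rule DERIV_cong)
      (unfold sum_rates_pair_closure_exact[OF closure T_nonneg T_diag ij, of Sus]
        sum_rates_pair_closure_exact[OF closure T_nonneg T_diag ji, of Sus],
       simp add: expt_False conj_commute)
qed


theorem theorem3:
  fixes T :: "'n::finite \<Rightarrow> 'n \<Rightarrow> real"
    and gam :: "'n \<Rightarrow> real"
    and pi0 :: "'n \<Rightarrow> sir \<Rightarrow> real"
    and p :: "real \<Rightarrow> ('n \<Rightarrow> sir) \<Rightarrow> real"
  assumes T_nonneg: "\<forall>i j. T i j \<ge> 0"
    and T_diag: "\<forall>i. T i i = 0"
    and gam_pos: "\<forall>i. gam i > 0"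
    and tree: "tree_network T"
    and pi0_nonneg: "\<forall>i s. pi0 i s \<ge> 0"
    and pi0_sum: "\<forall>i. (\<Sum>s\<in>UNIV. pi0 i s) = 1"
    and init: "\<forall>x. p 0 x = (\<Prod>i\<in>UNIV. pi0 i (x i))"
    and forward: "kolmogorov_forward T gam p"
  shows "\<forall>t\<ge>0. \<forall>i.
    ((\<lambda>s. expt p s (\<lambda>x. x i = Sus)) has_real_derivative
       - (\<Sum>j\<in>UNIV. T i j * expt p t (\<lambda>x. x i = Sus \<and> x j = Inf))) (at t within {0..})
  \<and> ((\<lambda>s. expt p s (\<lambda>x. x i = Inf)) has_real_derivative
       (\<Sum>j\<in>UNIV. T i j * expt p t (\<lambda>x. x i = Sus \<and> x j = Inf))
       - gam i * expt p t (\<lambda>x. x i = Inf)) (at t within {0..})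
  \<and> (\<forall>j. und_adj T i j \<longrightarrow>
      ((\<lambda>s. expt p s (\<lambda>x. x i = Sus \<and> x j = Inf)) has_real_derivative
         (\<Sum>k\<in>UNIV - {i}. T j k * frac (expt p t (\<lambda>x. x i = Sus \<and> x j = Sus) * expt p t (\<lambda>x. x j = Sus \<and> x k = Inf))
                                         (expt p t (\<lambda>x. x j = Sus)))
       - (\<Sum>k\<in>UNIV - {j}. T i k * frac (expt p t (\<lambda>x. x i = Sus \<and> x k = Inf) * expt p t (\<lambda>x. x i = Sus \<and> x j = Inf))
                                         (expt p t (\<lambda>x. x i = Sus)))
       - T i j * expt p t (\<lambda>x. x i = Sus \<and> x j = Inf)
       - gam j * expt p t (\<lambda>x. x i = Sus \<and> x j = Inf)) (at t within {0..})
    \<and> ((\<lambda>s. expt p s (\<lambda>x. x i = Sus \<and> x j = Sus)) has_real_derivative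
         - (\<Sum>k\<in>UNIV - {j}. T i k * frac (expt p t (\<lambda>x. x i = Sus \<and> x j = Sus) * expt p t (\<lambda>x. x i = Sus \<and> x k = Inf))
                                         (expt p t (\<lambda>x. x i = Sus)))
         - (\<Sum>k\<in>UNIV - {i}. T j k * frac (expt p t (\<lambda>x. x i = Sus \<and> x j = Sus) * expt p t (\<lambda>x. x j = Sus \<and> x k = Inf))
                                         (expt p t (\<lambda>x. x j = Sus)))) (at t within {0..}))"
proof -
  have closure: "pair_closure_exact T p t" if t: "t \<ge> 0" for t
  proof (rule tree_network_pair_closure_exact[OF T_nonneg tree init forward t])
    show "p t x \<ge> 0" for x
      using kolmogorov_forward_nonneg[OF T_nonneg _ pi0_nonneg init forward t] gam_pos
      by (simp add: less_imp_le)
  qed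
  show ?thesis
    using has_real_derivative_expt_Sus[OF forward] has_real_derivative_expt_Inf[OF forward]
      has_real_derivative_expt_Sus_Inf[OF forward _ T_nonneg T_diag closure]
      has_real_derivative_expt_Sus_Sus[OF forward _ T_nonneg T_diag closure]
    by blast
qed

end
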